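(* Let $G\subset SO(3)$ be either the tetrahedral group $\mathbb{T}$ or the octahedral group $\mathbb{O}$ (in the coordinates fixed in the context), and let $R_{ij},R_{ji},R_i,R_j\in SO(3)$ satisfy the set equality $$\{R_{ij}^T g R_{ji} : g\in G\}=\{R_i^T g R_j : g\in G\}.$$ Then there exist $h_{ij},h_{ji}\in N_{SO(3)}(G)$ such that $R_{ij}=h_{ij}R_i$ and $R_{ji}=h_{ji}R_j$.
   Context: In the fixed coordinate system, $\mathbb{O}$ is the group of all $3\times 3$ signed permutation matrices (matrices with exactly one nonzero entry in each row and column, that entry being $\pm1$) having determinant $1$; it has 24 elements. $\mathbb{T}\subset\mathbb{O}$ is the 12-element subgroup consisting of the matrices $DP$ where $P$ is the permutation matrix of an even permutation of $\{1,2,3\}$ (identity or a 3-cycle) and $D$ is a diagonal matrix with diagonal entries $\pm1$ and $\det D=1$. For a subgroup $\tilde G$ of a group $\tilde H$, the normalizer is $N_{\tilde H}(\tilde G)=\{\tilde h\in\tilde H:\tilde h^T\tilde G\tilde h=\tilde G\}$ (for rotations, $\tilde h^T=\tilde h^{-1}$). *)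

theory Defs
  imports "HOL-Analysis.Analysis" "HOL-Combinatorics.Permutations"
begin

type_synonym mat3 = "real^3^3"

definition SO3 :: "mat3 set" where
  "SO3 = {Q. rotation_matrix Q}"

definition signed_perm_matrix :: "mat3 \<Rightarrow> bool" where
  "signed_perm_matrix A \<longleftrightarrow>
     (\<forall>i. \<exists>!j. A $ i $ j \<noteq> 0) \<and> (\<forall>j. \<exists>!i. A $ i $ j \<noteq> 0) \<and>
     (\<forall>i j. A $ i $ j \<in> {-1, 0, 1})"

definition octahedral_group :: "mat3 set" where
  "octahedral_group = {A. signed_perm_matrix A \<and> det A = 1}"

definition perm_matrix :: "(3 \<Rightarrow> 3) \<Rightarrow> mat3" where
  "perm_matrix p = (\<chi> i j. if i = p j then 1 else 0)"

definition diag_matrix :: "(3 \<Rightarrow> real) \<Rightarrow> mat3" where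
  "diag_matrix d = (\<chi> i j. if i = j then d i else 0)"

definition tetrahedral_group :: "mat3 set" where
  "tetrahedral_group = {diag_matrix d ** perm_matrix p | d p.
      (\<forall>i. d i \<in> {-1, 1}) \<and> det (diag_matrix d) = 1 \<and> p permutes UNIV \<and> evenperm p}"

definition normalizer :: "mat3 set \<Rightarrow> mat3 set \<Rightarrow> mat3 set" where
  "normalizer H G = {h \<in> H. (\<lambda>g. transpose h ** g ** h) ` G = G}"

end

theory Submission
  imports Defs
begin

text \<open>
  Put \<open>A = Rij Ri\<^sup>T\<close> and \<open>B = Rji Rj\<^sup>T\<close>. Since left and right multiplication by rotations
  are injective, the hypothesis says exactly \<open>A\<^sup>T G B = G\<close>. As \<open>1 \<in> G\<close>, some \<open>g\<^sub>0 \<in> G\<close>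
  satisfies \<open>A\<^sup>T g\<^sub>0 B = 1\<close>, i.e. \<open>B = g\<^sub>0\<^sup>T A\<close>. Hence \<open>A\<^sup>T G A = A\<^sup>T (G g\<^sub>0\<^sup>T) A = A\<^sup>T G B = G\<close>
  and \<open>B\<^sup>T G B = A\<^sup>T (g\<^sub>0 G g\<^sub>0\<^sup>T) A = G\<close>, so \<open>A\<close> and \<open>B\<close> normalize \<open>G\<close>.
  Of the tetrahedral and octahedral groups we only use that they are groups of orthogonal
  matrices, which holds because signed permutation matrices are orthogonal.
\<close>

definition orthogonal_matrix_group :: "(real^'n^'n) set \<Rightarrow> bool" where
  "orthogonal_matrix_group G \<longleftrightarrow>
     mat 1 \<in> G \<and> (\<forall>x\<in>G. \<forall>y\<in>G. x ** y \<in> G) \<and> (\<forall>x\<in>G. transpose x \<in> G) \<and>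
     (\<forall>x\<in>G. orthogonal_matrix x)"

lemma orthogonal_matrix_mul_cancel:
  fixes Q :: "real^'n^'n"
  assumes "orthogonal_matrix Q"
  shows "transpose Q ** Q ** X = X" "Q ** transpose Q ** X = X"
    "X ** Q ** transpose Q = X" "X ** transpose Q ** Q = X"
  using assms unfolding orthogonal_matrix_def by (simp_all flip: matrix_mul_assoc)

lemma orthogonal_matrix_group_left_mult_image:
  assumes G: "orthogonal_matrix_group G" and h: "h \<in> G"
  shows "(\<lambda>x. h ** x) ` G = G"
proof (intro equalityI subsetI)
  fix y assume "y \<in> G"
  with G h have "y = h ** (transpose h ** y)" "transpose h ** y \<in> G"
    by (auto simp: orthogonal_matrix_group_def orthogonal_matrix_mul_cancel matrix_mul_assoc)
  then show "y \<in> (\<lambda>x. h ** x) ` G" by blast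
qed (use G h in \<open>auto simp: orthogonal_matrix_group_def\<close>)

lemma orthogonal_matrix_group_right_mult_image:
  assumes G: "orthogonal_matrix_group G" and h: "h \<in> G"
  shows "(\<lambda>x. x ** h) ` G = G"
proof (intro equalityI subsetI)
  fix y assume "y \<in> G"
  with G h have "y = y ** transpose h ** h" "y ** transpose h \<in> G"
    by (auto simp: orthogonal_matrix_group_def orthogonal_matrix_mul_cancel)
  then show "y \<in> (\<lambda>x. x ** h) ` G" by blast
qed (use G h in \<open>auto simp: orthogonal_matrix_group_def\<close>)

lemma two_sided_mult_image_eq_iff:
  fixes Ri Rj :: "real^'n^'n"
  assumes "orthogonal_matrix Ri" "orthogonal_matrix Rj"
  shows "(\<lambda>g. transpose (A ** Ri) ** g ** (B ** Rj)) ` G = (\<lambda>g. transpose Ri ** g ** Rj) ` G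
     \<longleftrightarrow> (\<lambda>g. transpose A ** g ** B) ` G = G"
proof -
  let ?f = "\<lambda>x. transpose Ri ** x ** Rj"
  have "inj ?f"
    by (rule inj_on_inverseI[where g = "\<lambda>y. Ri ** y ** transpose Rj"])
       (simp add: assms orthogonal_matrix_mul_cancel matrix_mul_assoc)
  moreover have "(\<lambda>g. transpose (A ** Ri) ** g ** (B ** Rj)) ` G = ?f ` (\<lambda>g. transpose A ** g ** B) ` G"
    by (simp add: image_image matrix_transpose_mul matrix_mul_assoc)
  ultimately show ?thesis
    by (simp add: inj_image_eq_iff)
qed

lemma two_sided_mult_image_normalizes:
  fixes A B :: "real^'n^'n"
  assumes G: "orthogonal_matrix_group G" and A: "orthogonal_matrix A"
    and AGB: "(\<lambda>g. transpose A ** g ** B) ` G = G"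
  shows "(\<lambda>g. transpose A ** g ** A) ` G = G" "(\<lambda>g. transpose B ** g ** B) ` G = G"
proof -
  have "mat 1 \<in> (\<lambda>g. transpose A ** g ** B) ` G"
    using G AGB by (simp add: orthogonal_matrix_group_def)
  then obtain g0 where g0: "g0 \<in> G" "mat 1 = transpose A ** g0 ** B"
    by blast
  have g0_orth: "orthogonal_matrix g0" and g0_tr: "transpose g0 \<in> G"
    using G g0(1) by (auto simp: orthogonal_matrix_group_def)
  have "B = transpose g0 ** A ** (transpose A ** g0 ** B)"
    using A g0_orth by (simp add: matrix_mul_assoc orthogonal_matrix_mul_cancel)
  then have B: "B = transpose g0 ** A"
    by (simp flip: g0(2))
  have "(\<lambda>g. transpose A ** g ** B) = (\<lambda>g. transpose A ** g ** A) \<circ> (\<lambda>g. g ** transpose g0)"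
    by (simp add: fun_eq_iff B matrix_mul_assoc)
  then have "(\<lambda>g. transpose A ** g ** B) ` G = (\<lambda>g. transpose A ** g ** A) ` (\<lambda>g. g ** transpose g0) ` G"
    by (simp only: image_comp)
  then show conj_A: "(\<lambda>g. transpose A ** g ** A) ` G = G"
    by (simp only: AGB orthogonal_matrix_group_right_mult_image[OF G g0_tr])
  have "(\<lambda>g. transpose B ** g ** B) = (\<lambda>g. transpose A ** g ** A) \<circ> (\<lambda>g. g ** transpose g0) \<circ> (\<lambda>g. g0 ** g)"
    by (simp add: fun_eq_iff B matrix_transpose_mul matrix_mul_assoc)
  then have "(\<lambda>g. transpose B ** g ** B) ` G
      = (\<lambda>g. transpose A ** g ** A) ` (\<lambda>g. g ** transpose g0) ` (\<lambda>g. g0 ** g) ` G"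
    by (simp only: image_comp o_assoc)
  then show "(\<lambda>g. transpose B ** g ** B) ` G = G"
    by (simp only: conj_A orthogonal_matrix_group_right_mult_image[OF G g0_tr]
        orthogonal_matrix_group_left_mult_image[OF G g0(1)])
qed

lemma rotation_matrix_mul_transpose:
  fixes A B :: "real^'n^'n"
  assumes "rotation_matrix A" "rotation_matrix B"
  shows "rotation_matrix (A ** transpose B)"
  using assms
  by (simp add: rotation_matrix_def orthogonal_matrix_mul orthogonal_matrix_transpose det_mul det_transpose)

lemma diag_perm_entry:
  "(diag_matrix d ** perm_matrix p) $ i $ j = (if i = p j then d i else 0)"
  by (simp add: matrix_matrix_mult_def diag_matrix_def perm_matrix_def mult_delta_left mult_delta_right)

lemma diag_perm_eqI:
  assumes "\<And>i j. A $ i $ j = (if i = p j then d i else 0)"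
  shows "A = diag_matrix d ** perm_matrix p"
  using assms by (simp add: vec_eq_iff diag_perm_entry)

lemma diag_perm_mult:
  assumes "p permutes UNIV"
  shows "(diag_matrix d ** perm_matrix p) ** (diag_matrix e ** perm_matrix q)
     = diag_matrix (\<lambda>i. d i * e (inv p i)) ** perm_matrix (p \<circ> q)"
  by (rule diag_perm_eqI)
     (auto simp: matrix_matrix_mult_def[of "diag_matrix d ** perm_matrix p"] diag_perm_entry
       mult_delta_left mult_delta_right permutes_inverses[OF assms])

lemma transpose_diag_perm:
  assumes "p permutes UNIV"
  shows "transpose (diag_matrix d ** perm_matrix p) = diag_matrix (d \<circ> p) ** perm_matrix (inv p)"
  by (rule diag_perm_eqI)
     (auto simp: transpose_def diag_perm_entry permutes_inverses[OF assms] permutes_inv_eq[OF assms])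

lemma mat_1_eq_diag_perm: "mat 1 = diag_matrix (\<lambda>_. 1) ** perm_matrix id"
  by (rule diag_perm_eqI) (simp add: mat_def)

lemma det_diag_matrix: "det (diag_matrix d) = prod d UNIV"
  by (subst det_diagonal) (auto simp: diag_matrix_def)

definition sign_vector :: "('n \<Rightarrow> real) \<Rightarrow> bool" where
  "sign_vector d \<longleftrightarrow> (\<forall>i. d i \<in> {-1, 1})"

lemma sign_vector_mult: "sign_vector d \<Longrightarrow> sign_vector e \<Longrightarrow> sign_vector (\<lambda>i. d i * e (f i))"
  unfolding sign_vector_def by (metis insertE insertI1 insertI2 mult_1 mult_minus1 minus_minus singletonD)

lemma sign_vector_comp: "sign_vector d \<Longrightarrow> sign_vector (d \<circ> f)"
  by (simp add: sign_vector_def)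

lemma orthogonal_matrix_diag_perm:
  assumes p: "p permutes UNIV" and d: "sign_vector d"
  shows "orthogonal_matrix (diag_matrix d ** perm_matrix p)"
proof -
  have "d i * d i = 1" for i
    using d unfolding sign_vector_def by (metis insertE singletonD mult_1 mult_minus1 minus_minus)
  then show ?thesis
    unfolding orthogonal_matrix transpose_diag_perm[OF p] diag_perm_mult[OF permutes_inv[OF p]]
    by (simp add: permutes_inv_inv[OF p] permutes_inv_o[OF p] mat_1_eq_diag_perm)
qed

lemma signed_perm_matrix_iff_diag_perm:
  "signed_perm_matrix A \<longleftrightarrow>
     (\<exists>d p. sign_vector d \<and> p permutes UNIV \<and> A = diag_matrix d ** perm_matrix p)"
proof
  assume "signed_perm_matrix A"
  then have row: "\<And>i. \<exists>!j. A $ i $ j \<noteq> 0" and col: "\<And>j. \<exists>!i. A $ i $ j \<noteq> 0"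
    and entries: "\<And>i j. A $ i $ j \<in> {-1, 0, 1}"
    unfolding signed_perm_matrix_def by auto
  define p where "p j = (THE i. A $ i $ j \<noteq> 0)" for j
  have p_nonzero: "A $ p j $ j \<noteq> 0" for j
    unfolding p_def using theI'[OF col] .
  have p_unique: "A $ i $ j \<noteq> 0 \<Longrightarrow> i = p j" for i j
    unfolding p_def by (rule the1_equality[OF col, symmetric])
  have "surj p"
    using row p_unique by (metis surjI)
  then have p: "p permutes UNIV"
    by (intro bij_imp_permutes) (simp_all add: bij_def finite_UNIV_surj_inj)
  define d where "d i = A $ i $ inv p i" for i
  have "A $ i $ j = (if i = p j then d i else 0)" for i j
    using p_unique[of i j] by (auto simp: d_def permutes_inverses[OF p])
  moreover have "sign_vector d"
    unfolding sign_vector_def d_def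
    using p_nonzero entries by (metis insert_iff permutes_inverses(1)[OF p])
  ultimately show "\<exists>d p. sign_vector d \<and> p permutes UNIV \<and> A = diag_matrix d ** perm_matrix p"
    using p diag_perm_eqI by blast
next
  assume "\<exists>d p. sign_vector d \<and> p permutes UNIV \<and> A = diag_matrix d ** perm_matrix p"
  then obtain d p where d: "sign_vector d" and p: "p permutes UNIV"
    and A: "A = diag_matrix d ** perm_matrix p" by blast
  have nonzero: "(if i = p j then d i else 0) \<noteq> 0 \<longleftrightarrow> p j = i" for i j
    using d unfolding sign_vector_def by (metis insert_iff singletonD zero_neq_neg_one zero_neq_one)
  show "signed_perm_matrix A"
    using p d unfolding signed_perm_matrix_def permutes_def sign_vector_def A diag_perm_entry nonzero
    by auto
qed

lemma signed_perm_matrix_mat_1: "signed_perm_matrix (mat 1)"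
  unfolding signed_perm_matrix_iff_diag_perm mat_1_eq_diag_perm
  by (intro exI[of _ "\<lambda>_. 1"] exI[of _ id]) (simp add: permutes_id sign_vector_def)

lemma signed_perm_matrix_mult:
  assumes "signed_perm_matrix A" "signed_perm_matrix B"
  shows "signed_perm_matrix (A ** B)"
proof -
  obtain d p e q where d: "sign_vector d" and p: "p permutes UNIV"
    and e: "sign_vector e" and q: "q permutes UNIV"
    and "A = diag_matrix d ** perm_matrix p" "B = diag_matrix e ** perm_matrix q"
    using assms unfolding signed_perm_matrix_iff_diag_perm by blast
  then have "A ** B = diag_matrix (\<lambda>i. d i * e (inv p i)) ** perm_matrix (p \<circ> q)"
    using diag_perm_mult[OF p] by simp
  then show ?thesis
    unfolding signed_perm_matrix_iff_diag_perm
    using sign_vector_mult[OF d e] permutes_compose[OF q p] by blast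
qed

lemma signed_perm_matrix_transpose:
  assumes "signed_perm_matrix A"
  shows "signed_perm_matrix (transpose A)"
proof -
  obtain d p where d: "sign_vector d" and p: "p permutes UNIV"
    and "A = diag_matrix d ** perm_matrix p"
    using assms unfolding signed_perm_matrix_iff_diag_perm by blast
  then have "transpose A = diag_matrix (d \<circ> p) ** perm_matrix (inv p)"
    using transpose_diag_perm[OF p] by simp
  then show ?thesis
    unfolding signed_perm_matrix_iff_diag_perm
    using sign_vector_comp[OF d] permutes_inv[OF p] by blast
qed

lemma orthogonal_matrix_signed_perm:
  "signed_perm_matrix A \<Longrightarrow> orthogonal_matrix A"
  unfolding signed_perm_matrix_iff_diag_perm using orthogonal_matrix_diag_perm by blast

lemma orthogonal_matrix_group_octahedral: "orthogonal_matrix_group octahedral_group"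
  unfolding orthogonal_matrix_group_def octahedral_group_def
  by (simp add: signed_perm_matrix_mat_1 signed_perm_matrix_mult signed_perm_matrix_transpose
      orthogonal_matrix_signed_perm det_mul det_transpose)

lemma mem_tetrahedral_group_iff:
  "A \<in> tetrahedral_group \<longleftrightarrow>
     (\<exists>d p. sign_vector d \<and> prod d UNIV = 1 \<and> p permutes UNIV \<and> evenperm p \<and>
       A = diag_matrix d ** perm_matrix p)"
  by (auto simp: tetrahedral_group_def det_diag_matrix sign_vector_def)

lemma orthogonal_matrix_group_tetrahedral: "orthogonal_matrix_group tetrahedral_group"
proof -
  have perm: "p permutes (UNIV :: 3 set) \<Longrightarrow> permutation p" for p
    by (rule permutes_imp_permutation) simp_all
  have mult: "A ** B \<in> tetrahedral_group"
    if A_mem: "A \<in> tetrahedral_group" and B_mem: "B \<in> tetrahedral_group" for A B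
  proof -
    obtain d p where d: "sign_vector d" "prod d UNIV = 1" and p: "p permutes UNIV" "evenperm p"
      and A: "A = diag_matrix d ** perm_matrix p"
      using A_mem unfolding mem_tetrahedral_group_iff by blast
    obtain e q where e: "sign_vector e" "prod e UNIV = 1" and q: "q permutes UNIV" "evenperm q"
      and B: "B = diag_matrix e ** perm_matrix q"
      using B_mem unfolding mem_tetrahedral_group_iff by blast
    have "prod (\<lambda>i. d i * e (inv p i)) UNIV = prod d UNIV * prod (e \<circ> inv p) UNIV"
      by (simp add: prod.distrib)
    also have "\<dots> = 1"
      using d(2) e(2) prod.permute[OF permutes_inv[OF p(1)], of e] by simp
    finally have "prod (\<lambda>i. d i * e (inv p i)) UNIV = 1" .
    moreover have "evenperm (p \<circ> q)"
      using evenperm_comp[OF perm[OF p(1)] perm[OF q(1)]] p(2) q(2) by simp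
    ultimately show ?thesis
      unfolding A B diag_perm_mult[OF p(1)] mem_tetrahedral_group_iff
      using sign_vector_mult[OF d(1) e(1)] permutes_compose[OF q(1) p(1)] by blast
  qed
  have transp: "transpose A \<in> tetrahedral_group" if A_mem: "A \<in> tetrahedral_group" for A
  proof -
    obtain d p where d: "sign_vector d" "prod d UNIV = 1" and p: "p permutes UNIV" "evenperm p"
      and A: "A = diag_matrix d ** perm_matrix p"
      using A_mem unfolding mem_tetrahedral_group_iff by blast
    have "prod (d \<circ> p) UNIV = 1"
      using d(2) prod.permute[OF p(1), of d] by simp
    moreover have "evenperm (inv p)"
      using evenperm_inv[OF perm[OF p(1)]] p(2) by simp
    ultimately show ?thesis
      unfolding A transpose_diag_perm[OF p(1)] mem_tetrahedral_group_iff
      using sign_vector_comp[OF d(1)] permutes_inv[OF p(1)] by blast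
  qed
  have "mat 1 \<in> tetrahedral_group"
    unfolding mem_tetrahedral_group_iff mat_1_eq_diag_perm
    by (intro exI[of _ "\<lambda>_. 1"] exI[of _ id]) (simp add: sign_vector_def permutes_id)
  moreover have "orthogonal_matrix A" if "A \<in> tetrahedral_group" for A
    using that orthogonal_matrix_diag_perm unfolding mem_tetrahedral_group_iff by blast
  ultimately show ?thesis
    unfolding orthogonal_matrix_group_def using mult transp by blast
qed

theorem proposition1:
  fixes G :: "(real^3^3) set" and Rij Rji Ri Rj :: "real^3^3"
  assumes "G = tetrahedral_group \<or> G = octahedral_group"
    and "Rij \<in> SO3" and "Rji \<in> SO3" and "Ri \<in> SO3" and "Rj \<in> SO3"
    and "(\<lambda>g. transpose Rij ** g ** Rji) ` G = (\<lambda>g. transpose Ri ** g ** Rj) ` G"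
  shows "\<exists>hij hji. hij \<in> normalizer SO3 G \<and> hji \<in> normalizer SO3 G \<and>
           Rij = hij ** Ri \<and> Rji = hji ** Rj"
proof -
  have G: "orthogonal_matrix_group G"
    using assms(1) orthogonal_matrix_group_tetrahedral orthogonal_matrix_group_octahedral by blast
  have rot: "rotation_matrix Rij" "rotation_matrix Rji" "rotation_matrix Ri" "rotation_matrix Rj"
    using assms(2-5) by (simp_all add: SO3_def)
  then have orth: "orthogonal_matrix Ri" "orthogonal_matrix Rj"
    by (simp_all add: rotation_matrix_def)
  define A where "A = Rij ** transpose Ri"
  define B where "B = Rji ** transpose Rj"
  have factor: "Rij = A ** Ri" "Rji = B ** Rj"
    using orth by (simp_all add: A_def B_def orthogonal_matrix_mul_cancel)
  have "A \<in> SO3" "B \<in> SO3"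
    using rot by (simp_all add: A_def B_def SO3_def rotation_matrix_mul_transpose)
  moreover have "(\<lambda>g. transpose A ** g ** B) ` G = G"
    using assms(6) two_sided_mult_image_eq_iff[OF orth] by (simp only: factor)
  moreover have "orthogonal_matrix A"
    using \<open>A \<in> SO3\<close> by (simp add: SO3_def rotation_matrix_def)
  ultimately show ?thesis
    using factor two_sided_mult_image_normalizes[OF G] unfolding normalizer_def by blast
qed

end
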